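(* Let $X$ be a continuum that is $d(X)$-Baire. Then the union of any nest (family totally ordered by inclusion) of closed nowhere dense subsets of $X$ is not equal to $X$.
   Context: A continuum is a nondegenerate compact connected Hausdorff space. $d(X)$ is the least cardinality of a dense subset of $X$; $X$ is $\alpha$-Baire if every family of $\alpha$ many open dense subsets of $X$ has dense intersection. *)

theory Defs
  imports "HOL-Analysis.Analysis"
begin

definition continuum :: "'a topology \<Rightarrow> bool" where
  "continuum X \<longleftrightarrow> compact_space X \<and> connected_space X \<and> Hausdorff_space X
     \<and> (\<exists>x\<in>topspace X. \<exists>y\<in>topspace X. x \<noteq> y)"

definition dense_in :: "'a topology \<Rightarrow> 'a set \<Rightarrow> bool" where
  "dense_in X D \<longleftrightarrow> D \<subseteq> topspace X \<and> X closure_of D = topspace X"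

definition nowhere_dense_in :: "'a topology \<Rightarrow> 'a set \<Rightarrow> bool" where
  "nowhere_dense_in X S \<longleftrightarrow> S \<subseteq> topspace X \<and> X interior_of (X closure_of S) = {}"

text \<open>D is a dense subset of least cardinality, i.e. card_of D represents d(X).\<close>
definition density_witness :: "'a topology \<Rightarrow> 'a set \<Rightarrow> bool" where
  "density_witness X D \<longleftrightarrow> dense_in X D \<and>
     (\<forall>D'. dense_in X D' \<longrightarrow> ordLeq3 (card_of D) (card_of D'))"

text \<open>X is kappa-Baire where kappa = |K|: every family of at most kappa many open dense
  subsets has dense intersection.\<close>
definition card_Baire :: "'a topology \<Rightarrow> 'b set \<Rightarrow> bool" where
  "card_Baire X K \<longleftrightarrow> (\<forall>\<F>. (\<forall>U\<in>\<F>. openin X U \<and> dense_in X U) \<and> ordLeq3 (card_of \<F>) (card_of K)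
        \<longrightarrow> dense_in X (topspace X \<inter> \<Inter>\<F>))"

definition density_Baire :: "'a topology \<Rightarrow> bool" where
  "density_Baire X \<longleftrightarrow> (\<exists>D. density_witness X D \<and> card_Baire X D)"

end

theory Submission
  imports Defs
begin

text \<open>Pick for every point d of a dense set D of size d(X) a member N_d of the nest containing d.
  The complements of the N_d are d(X) many open dense sets, so by the Baire property some point x
  avoids every N_d. The member N of the nest containing x is then not contained in any N_d, hence
  contains all of them, hence contains D; being closed, N is all of X, which is absurd for a
  nowhere dense set.\<close>

lemma closedin_nowhere_dense_complement:
  assumes "closedin X N" "nowhere_dense_in X N"
  shows "openin X (topspace X - N)" "dense_in X (topspace X - N)"
proof -
  have "X interior_of N \<subseteq> X interior_of (X closure_of N)"
    by (simp add: closure_of_subset closedin_subset assms(1) interior_of_mono)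
  then have "X interior_of N = {}"
    using assms(2) by (simp add: nowhere_dense_in_def)
  then show "openin X (topspace X - N)" "dense_in X (topspace X - N)"
    using assms(1) by (auto simp: dense_in_def closure_of_complement)
qed

lemma dense_in_nonempty:
  assumes "dense_in X S" "topspace X \<noteq> {}"
  shows "S \<noteq> {}"
  using assms by (metis closure_of_empty dense_in_def)

lemma closedin_superset_of_dense:
  assumes "dense_in X D" "closedin X N" "D \<subseteq> N"
  shows "N = topspace X"
proof -
  have "X closure_of D \<subseteq> N"
    using assms(2,3) by (rule closure_of_minimal[rotated])
  then show ?thesis
    using assms(1) closedin_subset[OF assms(2)] unfolding dense_in_def by blast
qed

lemma card_Baire_INT:
  assumes "card_Baire X K" "\<And>k. k \<in> K \<Longrightarrow> openin X (U k) \<and> dense_in X (U k)"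
  shows "dense_in X (topspace X \<inter> (\<Inter>k\<in>K. U k))"
proof -
  have "\<forall>V\<in>U ` K. openin X V \<and> dense_in X V"
    using assms(2) by blast
  moreover have "ordLeq3 (card_of (U ` K)) (card_of K)"
    by (rule card_of_image)
  ultimately show ?thesis
    using assms(1) unfolding card_Baire_def by simp
qed

lemma chain_subset_member_absorbs:
  assumes "chain\<^sub>\<subseteq> \<N>" "N \<in> \<N>" "\<And>d. d \<in> D \<Longrightarrow> \<exists>M\<in>\<N>. d \<in> M \<and> \<not> N \<subseteq> M"
  shows "D \<subseteq> N"
proof
  fix d
  assume "d \<in> D"
  then obtain M where "M \<in> \<N>" "d \<in> M" "\<not> N \<subseteq> M"
    using assms(3) by blast
  then have "M \<subseteq> N"
    using assms(1,2) unfolding chain_subset_def by blast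
  with \<open>d \<in> M\<close> show "d \<in> N" ..
qed

theorem card_Baire_chain_nowhere_dense_not_cover:
  assumes "topspace X \<noteq> {}" "dense_in X D" "card_Baire X D"
    and closed_nowhere_dense: "\<forall>N\<in>\<N>. closedin X N \<and> nowhere_dense_in X N"
    and "chain\<^sub>\<subseteq> \<N>"
  shows "\<Union>\<N> \<noteq> topspace X"
proof
  assume cover: "\<Union>\<N> = topspace X"
  have "\<forall>d\<in>D. \<exists>M\<in>\<N>. d \<in> M"
    using assms(2) cover by (auto simp: dense_in_def)
  then obtain f where f: "\<And>d. d \<in> D \<Longrightarrow> f d \<in> \<N> \<and> d \<in> f d"
    by metis
  have "dense_in X (topspace X \<inter> (\<Inter>d\<in>D. topspace X - f d))"
    using assms(3) by (rule card_Baire_INT)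
      (use f closed_nowhere_dense closedin_nowhere_dense_complement in blast)
  then obtain x where x: "x \<in> topspace X" "\<And>d. d \<in> D \<Longrightarrow> x \<notin> f d"
    using dense_in_nonempty assms(1) by blast
  then obtain N where N: "N \<in> \<N>" "x \<in> N"
    using cover by blast
  have "D \<subseteq> N"
    using assms(5) N(1) by (rule chain_subset_member_absorbs) (use f x N(2) in blast)
  then have "N = topspace X"
    using assms(2) closed_nowhere_dense N(1) closedin_superset_of_dense by blast
  then have "X interior_of (X closure_of N) = topspace X"
    by simp
  then show False
    using closed_nowhere_dense N(1) assms(1) unfolding nowhere_dense_in_def by blast
qed

theorem mainTheorem5:
  fixes X :: "'a topology" and \<N> :: "'a set set"
  assumes "continuum X"
    and "density_Baire X"
    and "\<forall>N\<in>\<N>. closedin X N \<and> nowhere_dense_in X N"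
    and "\<forall>A\<in>\<N>. \<forall>B\<in>\<N>. A \<subseteq> B \<or> B \<subseteq> A"
  shows "\<Union>\<N> \<noteq> topspace X"
proof -
  have "topspace X \<noteq> {}"
    using assms(1) unfolding continuum_def by blast
  obtain D where "density_witness X D" "card_Baire X D"
    using assms(2) unfolding density_Baire_def by blast
  from \<open>density_witness X D\<close> have "dense_in X D"
    unfolding density_witness_def by blast
  have "chain\<^sub>\<subseteq> \<N>"
    using assms(4) unfolding chain_subset_def .
  show ?thesis
    by (rule card_Baire_chain_nowhere_dense_not_cover) fact+
qed

end
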